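(* Let $w$ be a weight on $(0,\infty)$, $W(t)=\int_0^tw(s)\,ds$, and $\overline W(t)=\sup_{s>0}\frac{W(st)}{W(s)}$. The following are equivalent: (i) $w\in B^*_\infty$; (ii) there exists $\lambda\in(0,1)$ with $\overline W(\lambda)<1$; (iii) there is $C>0$ such that $\frac{W(t)}{W(s)}\le C(1+\log(s/t))^{-1}$ for all $0<t\le s$; (iv) for every $p>0$ there is $C_p>0$ such that $\frac{W(t)}{W(s)}\le C_p(1+\log(s/t))^{-p}$ for all $0<t\le s$; (v) $\overline W(0^+)=0$; (vi) for every $\varepsilon>0$ there exists $\delta>0$ such that $W(t)\le\varepsilon W(s)$ whenever $t\le\delta s$.
   Context: A weight $w$ on $(0,\infty)$ is a positive locally integrable function. $w\in B^*_\infty$ means: there is $C>0$ with $\int_0^r\frac1t\int_0^tw(s)\,ds\,dt\le C\int_0^rw(s)\,ds$ for all $r>0$. *)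

theory Defs
  imports "HOL-Analysis.Analysis"
begin

definition weight :: "(real \<Rightarrow> real) \<Rightarrow> bool" where
  "weight w \<longleftrightarrow> (\<forall>s>0. w s > 0) \<and> (\<forall>r>0. w integrable_on {0..r})"

definition Wfun :: "(real \<Rightarrow> real) \<Rightarrow> real \<Rightarrow> real" where
  "Wfun w t = integral {0..t} w"

text \<open>Wbar(t) = sup over s>0 of W(st)/W(s) (only used for 0 < t < 1, where it is bounded by 1).\<close>
definition Wbar :: "(real \<Rightarrow> real) \<Rightarrow> real \<Rightarrow> real" where
  "Wbar w t = (SUP s\<in>{0<..}. Wfun w (s * t) / Wfun w s)"

text \<open>B*_infinity, with the left-hand integral taken as a (possibly infinite) nonnegative integral.\<close>
definition B_star_infty :: "(real \<Rightarrow> real) \<Rightarrow> bool" where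
  "B_star_infty w \<longleftrightarrow> (\<exists>C>0. \<forall>r>0.
     (\<integral>\<^sup>+ t. ennreal (Wfun w t / t) * indicator {0<..r} t \<partial>lborel) \<le> ennreal (C * Wfun w r))"

end

theory Submission
  imports Defs
begin

(* The B*_infty integral over (0,s] dominates the integral of W(t)/x over [t,s], which is
   W(t) log(s/t).  Hence W(t)/W(s) <= C/(1 + log(s/t)), so W(t) <= \<epsilon> W(s) as soon as t/s is
   small enough; in particular Wbar(0+) = 0 and Wbar(\<lambda>) < 1 for some \<lambda>.  Iterating
   W(\<lambda>s) <= b W(s) with b < 1 gives power decay W(t) <= K (t/s)^\<gamma> W(s), which beats every
   power of 1 + log(s/t) and makes the B*_infty integral at most (K/\<gamma>) W(r). *)

lemma integral_pos_real:
  fixes f :: "real \<Rightarrow> real"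
  assumes f: "f integrable_on {a..b}" and "a < b" and pos: "\<And>x. x \<in> {a<..<b} \<Longrightarrow> 0 < f x"
  shows "0 < integral {a..b} f"
proof -
  have "f absolutely_integrable_on {a<..<b}"
    using f pos by (intro nonnegative_absolutely_integrable_1) (auto simp: integrable_on_open_interval_real less_imp_le)
  then have int: "integrable lebesgue (\<lambda>x. indicator {a<..<b} x *\<^sub>R f x)"
    by (simp add: set_integrable_def)
  have eq: "integral {a..b} f = integral\<^sup>L lebesgue (\<lambda>x. indicator {a<..<b} x *\<^sub>R f x)"
    using \<open>f absolutely_integrable_on {a<..<b}\<close>
    by (simp add: integral_open_interval_real set_lebesgue_integral_eq_integral(2)[symmetric] set_lebesgue_integral_def)
  have "0 \<le> integral {a..b} f"
    unfolding eq using pos by (intro integral_nonneg_AE) (auto simp: indicator_def less_imp_le)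
  moreover have "integral {a..b} f \<noteq> 0"
  proof
    assume "integral {a..b} f = 0"
    then have "AE x in lebesgue. indicator {a<..<b} x *\<^sub>R f x = 0"
      unfolding eq using int pos by (subst (asm) integral_nonneg_eq_0_iff_AE) (auto simp: indicator_def less_imp_le)
    then have "AE x in lebesgue. x \<notin> {a<..<b}"
      by eventually_elim (metis indicator_simps(1) pos less_irrefl scaleR_one)
    then have "{a<..<b} \<in> null_sets lebesgue"
      by (subst AE_iff_null_sets) auto
    then show False using \<open>a < b\<close> by (simp add: null_sets_def)
  qed
  ultimately show ?thesis by linarith
qed

lemma nn_integral_inverse_Icc:
  assumes "0 < t" "t \<le> s" "0 \<le> c"
  shows "(\<integral>\<^sup>+ x. ennreal (c / x) * indicator {t..s} x \<partial>lborel) = ennreal (c * ln (s / t))"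
proof (rule nn_integral_has_integral_lebesgue')
  have "((\<lambda>x. c * ln x) has_real_derivative c / x) (at x within {t..s})" if "x \<in> {t..s}" for x
    using that assms by (auto intro!: derivative_eq_intros)
  then have "((\<lambda>x. c / x) has_integral (c * ln s - c * ln t)) {t..s}"
    using assms by (intro fundamental_theorem_of_calculus) (auto simp: has_real_derivative_iff_has_vector_derivative[symmetric])
  then show "((\<lambda>x. c / x) has_integral (c * ln (s / t))) {t..s}"
    using assms by (simp add: ln_div right_diff_distrib)
qed (use assms in auto)

lemma log_bound_imp_log_decay:
  fixes f :: "real \<Rightarrow> real"
  assumes pos: "\<And>t. 0 < t \<Longrightarrow> 0 < f t" and mono: "mono_on {0<..} f"
    and "\<exists>C>0. \<forall>t s. 0 < t \<and> t \<le> s \<longrightarrow> f t * ln (s / t) \<le> C * f s"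
  shows "\<exists>C>0. \<forall>t s. 0 < t \<and> t \<le> s \<longrightarrow> f t / f s \<le> C * (1 + ln (s / t)) powr (-1)"
proof -
  obtain C where "0 < C" and bound: "\<And>t s. 0 < t \<Longrightarrow> t \<le> s \<Longrightarrow> f t * ln (s / t) \<le> C * f s"
    using assms(3) by blast
  have "f t / f s \<le> (1 + C) * (1 + ln (s / t)) powr (-1)" if "0 < t" "t \<le> s" for t s
  proof -
    have "0 \<le> ln (s / t)" using that by simp
    have "f t * (1 + ln (s / t)) = f t + f t * ln (s / t)"
      by (simp add: algebra_simps)
    also have "\<dots> \<le> f s + C * f s"
      using bound[OF that] mono_onD[OF mono, of t s] that by (intro add_mono) auto
    finally have "f t \<le> (1 + C) * f s / (1 + ln (s / t))"
      using \<open>0 \<le> ln (s / t)\<close> by (simp add: pos_le_divide_eq algebra_simps)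
    then show ?thesis
      using pos[of s] that by (simp add: powr_neg_one pos_divide_le_eq)
  qed
  then show ?thesis using \<open>0 < C\<close> by (intro exI[of _ "1 + C"]) auto
qed

lemma log_decay_imp_small_ratio:
  fixes f :: "real \<Rightarrow> real"
  assumes pos: "\<And>t. 0 < t \<Longrightarrow> 0 < f t"
    and "\<exists>C>0. \<forall>t s. 0 < t \<and> t \<le> s \<longrightarrow> f t / f s \<le> C * (1 + ln (s / t)) powr (-1)"
  shows "\<forall>\<epsilon>>0. \<exists>\<delta>>0. \<forall>t s. 0 < t \<and> 0 < s \<and> t \<le> \<delta> * s \<longrightarrow> f t \<le> \<epsilon> * f s"
proof (intro allI impI)
  fix \<epsilon> :: real assume "0 < \<epsilon>"
  obtain C where "0 < C"
    and decay: "\<And>t s. 0 < t \<Longrightarrow> t \<le> s \<Longrightarrow> f t / f s \<le> C * (1 + ln (s / t)) powr (-1)"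
    using assms(2) by blast
  define \<delta> where "\<delta> = exp (- (C / \<epsilon>))"
  have "0 < \<delta>" "\<delta> \<le> 1" unfolding \<delta>_def using \<open>0 < C\<close> \<open>0 < \<epsilon>\<close> by simp_all
  have "f t \<le> \<epsilon> * f s" if ts: "0 < t" "0 < s" "t \<le> \<delta> * s" for t s
  proof -
    have "t \<le> s"
      using ts mult_left_le_one_le[of s \<delta>] \<open>0 < \<delta>\<close> \<open>\<delta> \<le> 1\<close> by linarith
    have "1 / \<delta> \<le> s / t"
      using ts \<open>0 < \<delta>\<close> by (simp add: mult.commute pos_divide_le_eq)
    then have "C / \<epsilon> \<le> ln (s / t)"
      using ts \<open>0 < \<delta>\<close> unfolding \<delta>_def by (subst (asm) ln_le_cancel_iff[symmetric]) (auto simp: ln_div)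
    then have "C \<le> \<epsilon> * (1 + ln (s / t))"
      using \<open>0 < \<epsilon>\<close> by (simp add: pos_divide_le_eq distrib_left mult.commute)
    have "0 \<le> ln (s / t)" using ts \<open>t \<le> s\<close> by simp
    have "f t / f s \<le> C / (1 + ln (s / t))"
      using decay[OF ts(1) \<open>t \<le> s\<close>] \<open>0 \<le> ln (s / t)\<close> by (simp add: powr_neg_one)
    also have "\<dots> \<le> \<epsilon>"
      using \<open>C \<le> \<epsilon> * (1 + ln (s / t))\<close> \<open>0 \<le> ln (s / t)\<close> by (simp add: pos_divide_le_eq mult.commute)
    finally show ?thesis
      using pos[OF ts(2)] by (simp add: pos_divide_le_eq)
  qed
  with \<open>0 < \<delta>\<close> show "\<exists>\<delta>>0. \<forall>t s. 0 < t \<and> 0 < s \<and> t \<le> \<delta> * s \<longrightarrow> f t \<le> \<epsilon> * f s"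
    by blast
qed

lemma geometric_decay_imp_power_decay:
  fixes f :: "real \<Rightarrow> real"
  assumes mono: "mono_on {0<..} f" and nonneg: "\<And>s. 0 < s \<Longrightarrow> 0 \<le> f s"
    and lam: "0 < lam" "lam < 1" and b: "0 < b" "b < 1"
    and step: "\<And>s. 0 < s \<Longrightarrow> f (lam * s) \<le> b * f s"
    and "0 < t" "t \<le> s"
  shows "f t \<le> (1 / b) * (t / s) powr (ln b / ln lam) * f s"
proof -
  have iter: "f (lam ^ n * s) \<le> b ^ n * f s" for n
  proof (induction n)
    case (Suc n)
    have "f (lam ^ Suc n * s) = f (lam * (lam ^ n * s))" by (simp add: mult.assoc)
    also have "\<dots> \<le> b * f (lam ^ n * s)" using step lam \<open>0 < t\<close> \<open>t \<le> s\<close> by simp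
    also have "\<dots> \<le> b * (b ^ n * f s)" using Suc b by (intro mult_left_mono) auto
    finally show ?case by simp
  qed simp
  define x where "x = ln (s / t) / - ln lam"
  define n where "n = nat \<lfloor>x\<rfloor>"
  have "0 \<le> x" unfolding x_def using assms by (simp add: divide_nonneg_neg)
  then have n: "real n \<le> x" "x < real n + 1" unfolding n_def by linarith+
  have "t / s = lam powr x"
    unfolding x_def powr_def using assms by (simp add: ln_div exp_diff)
  also have "\<dots> \<le> lam ^ n"
    using n lam by (simp add: powr_realpow[symmetric] powr_mono')
  finally have "f t \<le> f (lam ^ n * s)"
    using assms by (intro mono_onD[OF mono]) (auto simp: pos_divide_le_eq)
  also have "\<dots> \<le> b ^ n * f s" by (rule iter)
  also have "b ^ n \<le> b powr (x - 1)"
    using n b by (simp add: powr_realpow[symmetric] powr_mono')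
  also have "b powr (x - 1) = (1 / b) * (t / s) powr (ln b / ln lam)"
  proof -
    have "ln lam < 0" using lam by simp
    then have "b powr x = (t / s) powr (ln b / ln lam)"
      unfolding x_def powr_def using assms by (simp add: ln_div field_simps)
    then show ?thesis using b by (simp add: powr_diff)
  qed
  finally show ?thesis using nonneg[of s] assms by (simp add: mult_right_mono)
qed

lemma exp_neg_le_powr:
  fixes \<gamma> p :: real
  assumes "0 < \<gamma>" "0 < p"
  shows "\<exists>C>0. \<forall>L\<ge>0. exp (- (\<gamma> * L)) \<le> C * (1 + L) powr (-p)"
proof (intro exI conjI allI impI)
  define m where "m = min 1 (\<gamma> / p)"
  have m: "0 < m" "m \<le> 1" "m \<le> \<gamma> / p" unfolding m_def using assms by auto
  show "0 < m powr (-p)" using m by simp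
  fix L :: real assume "0 \<le> L"
  have "m * (1 + L) \<le> 1 + \<gamma> / p * L"
    using m mult_right_mono[OF m(3) \<open>0 \<le> L\<close>] by (simp add: algebra_simps)
  also have "\<dots> \<le> exp (\<gamma> / p * L)" by (rule exp_ge_add_one_self)
  finally have "(m * (1 + L)) powr p \<le> exp (\<gamma> / p * L) powr p"
    using m \<open>0 \<le> L\<close> assms by (intro powr_mono2) auto
  also have "\<dots> = exp (\<gamma> * L)"
    using assms by (simp add: powr_def)
  finally have "inverse (exp (\<gamma> * L)) \<le> inverse ((m * (1 + L)) powr p)"
    using m \<open>0 \<le> L\<close> by (intro le_imp_inverse_le) auto
  then show "exp (- (\<gamma> * L)) \<le> m powr (-p) * (1 + L) powr (-p)"
    using m \<open>0 \<le> L\<close> by (simp add: exp_minus powr_minus powr_mult)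
qed

lemma power_decay_imp_log_decay:
  fixes f :: "real \<Rightarrow> real"
  assumes pos: "\<And>t. 0 < t \<Longrightarrow> 0 < f t"
    and "\<exists>K>0. \<exists>\<gamma>>0. \<forall>t s. 0 < t \<and> t \<le> s \<longrightarrow> f t \<le> K * (t / s) powr \<gamma> * f s"
  shows "\<forall>p>0. \<exists>C>0. \<forall>t s. 0 < t \<and> t \<le> s \<longrightarrow> f t / f s \<le> C * (1 + ln (s / t)) powr (-p)"
proof (intro allI impI)
  fix p :: real assume "0 < p"
  obtain K \<gamma> where "0 < K" "0 < \<gamma>"
    and decay: "\<And>t s. 0 < t \<Longrightarrow> t \<le> s \<Longrightarrow> f t \<le> K * (t / s) powr \<gamma> * f s"
    using assms(2) by blast
  obtain C where "0 < C" and C: "\<And>L. 0 \<le> L \<Longrightarrow> exp (- (\<gamma> * L)) \<le> C * (1 + L) powr (-p)"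
    using exp_neg_le_powr[OF \<open>0 < \<gamma>\<close> \<open>0 < p\<close>] by blast
  have "f t / f s \<le> K * C * (1 + ln (s / t)) powr (-p)" if "0 < t" "t \<le> s" for t s
  proof -
    have "f t / f s \<le> K * (t / s) powr \<gamma>"
      using decay[OF that] pos[of s] that by (simp add: pos_divide_le_eq)
    also have "(t / s) powr \<gamma> = exp (- (\<gamma> * ln (s / t)))"
      using that by (simp add: powr_def ln_div algebra_simps)
    also have "K * \<dots> \<le> K * (C * (1 + ln (s / t)) powr (-p))"
      using C[of "ln (s / t)"] that \<open>0 < K\<close> by simp
    finally show ?thesis by (simp add: mult.assoc)
  qed
  then show "\<exists>C>0. \<forall>t s. 0 < t \<and> t \<le> s \<longrightarrow> f t / f s \<le> C * (1 + ln (s / t)) powr (-p)"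
    using \<open>0 < K\<close> \<open>0 < C\<close> by (intro exI[of _ "K * C"]) auto
qed

lemma Wfun_pos:
  assumes "weight w" "0 < t"
  shows "0 < Wfun w t"
  unfolding Wfun_def using assms by (intro integral_pos_real) (auto simp: weight_def)

lemma Wfun_mono_on:
  assumes "weight w"
  shows "mono_on {0<..} (Wfun w)"
proof (rule mono_onI)
  fix t s :: real assume "t \<in> {0<..}" "s \<in> {0<..}" "t \<le> s"
  then have w_int: "w integrable_on {0..s}" and w_pos: "\<And>x. x \<in> {t..s} \<Longrightarrow> 0 \<le> w x"
    using assms by (auto simp: weight_def less_imp_le)
  have "Wfun w s = Wfun w t + integral {t..s} w"
    unfolding Wfun_def using w_int \<open>t \<in> {0<..}\<close> \<open>t \<le> s\<close>
    by (intro Henstock_Kurzweil_Integration.integral_combine[symmetric]) auto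
  moreover have "0 \<le> integral {t..s} w"
    using w_int \<open>t \<in> {0<..}\<close> by (intro integral_nonneg w_pos integrable_on_subinterval[OF w_int]) auto
  ultimately show "Wfun w t \<le> Wfun w s" by linarith
qed

lemma Wbar_least:
  assumes "\<And>s. 0 < s \<Longrightarrow> Wfun w (s * x) / Wfun w s \<le> c"
  shows "Wbar w x \<le> c"
  unfolding Wbar_def by (rule cSUP_least) (use assms in auto)

lemma Wbar_upper:
  assumes "weight w" "0 < x" "x \<le> 1" "0 < s"
  shows "Wfun w (s * x) / Wfun w s \<le> Wbar w x"
  unfolding Wbar_def
proof (rule cSUP_upper)
  have "Wfun w (s * x) / Wfun w s \<le> 1" if "0 < s" for s
    using mono_onD[OF Wfun_mono_on[OF assms(1)], of "s * x" s] Wfun_pos[OF assms(1) that] assms that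
    by (simp add: mult_left_le)
  then show "bdd_above ((\<lambda>s. Wfun w (s * x) / Wfun w s) ` {0<..})"
    by (intro bdd_aboveI2[of _ _ 1]) auto
qed (use assms in auto)

lemma B_star_infty_imp_log_bound:
  assumes w: "weight w" and "B_star_infty w"
  shows "\<exists>C>0. \<forall>t s. 0 < t \<and> t \<le> s \<longrightarrow> Wfun w t * ln (s / t) \<le> C * Wfun w s"
proof -
  obtain C where "C > 0" and C: "\<And>r. 0 < r \<Longrightarrow>
     (\<integral>\<^sup>+ x. ennreal (Wfun w x / x) * indicator {0<..r} x \<partial>lborel) \<le> ennreal (C * Wfun w r)"
    using assms(2) unfolding B_star_infty_def by blast
  have "Wfun w t * ln (s / t) \<le> C * Wfun w s" if ts: "0 < t" "t \<le> s" for t s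
  proof -
    have "ennreal (Wfun w t * ln (s / t))
        = (\<integral>\<^sup>+ x. ennreal (Wfun w t / x) * indicator {t..s} x \<partial>lborel)"
      using ts Wfun_pos[OF w] by (intro nn_integral_inverse_Icc[symmetric]) (auto intro: less_imp_le)
    also have "\<dots> \<le> (\<integral>\<^sup>+ x. ennreal (Wfun w x / x) * indicator {0<..s} x \<partial>lborel)"
    proof (rule nn_integral_mono)
      fix x
      have "Wfun w t / x \<le> Wfun w x / x" if "x \<in> {t..s}"
        using that ts mono_onD[OF Wfun_mono_on[OF w], of t x] by (auto intro: divide_right_mono)
      then show "ennreal (Wfun w t / x) * indicator {t..s} x \<le> ennreal (Wfun w x / x) * indicator {0<..s} x"
        using ts by (auto simp: indicator_def intro: ennreal_leI)
    qed
    also have "\<dots> \<le> ennreal (C * Wfun w s)"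
      using C ts by simp
    finally show ?thesis
      using \<open>C > 0\<close> Wfun_pos[OF w, of s] ts by (simp add: ennreal_le_iff)
  qed
  with \<open>C > 0\<close> show ?thesis by blast
qed

lemma small_ratio_imp_Wbar_tendsto_0:
  assumes w: "weight w"
    and small: "\<forall>\<epsilon>>0. \<exists>\<delta>>0. \<forall>t s. 0 < t \<and> 0 < s \<and> t \<le> \<delta> * s \<longrightarrow> Wfun w t \<le> \<epsilon> * Wfun w s"
  shows "(Wbar w \<longlongrightarrow> 0) (at_right 0)"
proof (rule order_tendstoI)
  fix a :: real assume "a < 0"
  show "eventually (\<lambda>x. a < Wbar w x) (at_right 0)"
  proof (rule eventually_at_rightI)
    fix x :: real assume x: "x \<in> {0<..<1}"
    have "a < Wfun w (1 * x) / Wfun w 1"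
      using Wfun_pos[OF w] x \<open>a < 0\<close> by (simp add: less_trans)
    also have "\<dots> \<le> Wbar w x"
      using Wbar_upper[OF w, of x 1] x by simp
    finally show "a < Wbar w x" .
  qed simp
next
  fix a :: real assume "0 < a"
  then have "0 < a / 2" by simp
  with small obtain \<delta> where "0 < \<delta>"
    and \<delta>: "\<forall>t s. 0 < t \<and> 0 < s \<and> t \<le> \<delta> * s \<longrightarrow> Wfun w t \<le> a / 2 * Wfun w s"
    by blast
  show "eventually (\<lambda>x. Wbar w x < a) (at_right 0)"
  proof (rule eventually_at_rightI)
    fix x :: real assume x: "x \<in> {0<..<\<delta>}"
    have "Wbar w x \<le> a / 2"
    proof (rule Wbar_least)
      fix s :: real assume "0 < s"
      then have "Wfun w (s * x) \<le> a / 2 * Wfun w s"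
        using x \<delta> by simp
      then show "Wfun w (s * x) / Wfun w s \<le> a / 2"
        using Wfun_pos[OF w \<open>0 < s\<close>] by (simp add: pos_divide_le_eq)
    qed
    also have "\<dots> < a" using \<open>0 < a\<close> by simp
    finally show "Wbar w x < a" .
  qed (rule \<open>0 < \<delta>\<close>)
qed

lemma Wbar_tendsto_0_imp_Wbar_less_1:
  assumes "(Wbar w \<longlongrightarrow> 0) (at_right 0)"
  shows "\<exists>lam\<in>{0<..<1}. Wbar w lam < 1"
proof -
  have "eventually (\<lambda>x. Wbar w x < 1) (at_right 0)"
    using order_tendstoD(2)[OF assms] by simp
  moreover have "eventually (\<lambda>x. x \<in> {0<..<1}) (at_right (0::real))"
    by (rule eventually_at_rightI) auto
  ultimately have "eventually (\<lambda>x. x \<in> {0<..<1} \<and> Wbar w x < 1) (at_right 0)"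
    by eventually_elim auto
  then show ?thesis
    using eventually_happens'[OF trivial_limit_at_right_real] by blast
qed

lemma Wbar_less_1_imp_power_decay:
  assumes w: "weight w" and "\<exists>lam\<in>{0<..<1}. Wbar w lam < 1"
  shows "\<exists>K>0. \<exists>\<gamma>>0. \<forall>t s. 0 < t \<and> t \<le> s \<longrightarrow> Wfun w t \<le> K * (t / s) powr \<gamma> * Wfun w s"
proof -
  obtain lam where lam: "0 < lam" "lam < 1" and "Wbar w lam < 1"
    using assms(2) by auto
  \<comment> \<open>The max keeps b positive, so that the exponent ln b / ln lam below is meaningful.\<close>
  define b where "b = max (Wbar w lam) (1 / 2)"
  have b: "0 < b" "b < 1"
    using \<open>Wbar w lam < 1\<close> unfolding b_def by auto
  have step: "Wfun w (lam * s) \<le> b * Wfun w s" if "0 < s" for s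
  proof -
    have "Wfun w (s * lam) / Wfun w s \<le> b"
      using Wbar_upper[OF w lam(1) _ that] lam unfolding b_def by force
    then show ?thesis using Wfun_pos[OF w that] by (simp add: pos_divide_le_eq mult.commute)
  qed
  have "Wfun w t \<le> 1 / b * (t / s) powr (ln b / ln lam) * Wfun w s" if "0 < t" "t \<le> s" for t s
    using Wfun_pos[OF w] that
    by (intro geometric_decay_imp_power_decay[OF Wfun_mono_on[OF w] _ lam b step]) (auto intro: less_imp_le)
  moreover have "0 < 1 / b" "0 < ln b / ln lam"
    using lam b by (simp_all add: divide_neg_neg)
  ultimately show ?thesis by blast
qed

lemma power_decay_imp_B_star_infty:
  assumes w: "weight w"
    and "\<exists>K>0. \<exists>\<gamma>>0. \<forall>t s. 0 < t \<and> t \<le> s \<longrightarrow> Wfun w t \<le> K * (t / s) powr \<gamma> * Wfun w s"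
  shows "B_star_infty w"
  unfolding B_star_infty_def
proof -
  obtain K \<gamma> where "0 < K" "0 < \<gamma>"
    and decay: "\<And>t s. 0 < t \<Longrightarrow> t \<le> s \<Longrightarrow> Wfun w t \<le> K * (t / s) powr \<gamma> * Wfun w s"
    using assms(2) by blast
  have "(\<integral>\<^sup>+ x. ennreal (Wfun w x / x) * indicator {0<..r} x \<partial>lborel) \<le> ennreal (K / \<gamma> * Wfun w r)"
    if "0 < r" for r
  proof -
    define c where "c = K * Wfun w r / r powr \<gamma>"
    have "0 \<le> c" unfolding c_def using \<open>0 < K\<close> Wfun_pos[OF w \<open>0 < r\<close>] by simp
    have "Wfun w x / x \<le> c * x powr (\<gamma> - 1)" if "0 < x" "x \<le> r" for x
    proof -
      have "Wfun w x / x \<le> K * (x / r) powr \<gamma> * Wfun w r / x"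
        using decay[OF that] that by (simp add: divide_right_mono)
      also have "\<dots> = c * x powr (\<gamma> - 1)"
        unfolding c_def using that by (simp add: powr_divide powr_diff field_simps)
      finally show ?thesis .
    qed
    then have "(\<integral>\<^sup>+ x. ennreal (Wfun w x / x) * indicator {0<..r} x \<partial>lborel)
        \<le> (\<integral>\<^sup>+ x. ennreal (c * x powr (\<gamma> - 1)) * indicator {0..r} x \<partial>lborel)"
      by (intro nn_integral_mono) (auto simp: indicator_def intro: ennreal_leI)
    also have "\<dots> = ennreal (c * (r powr (\<gamma> - 1 + 1) / (\<gamma> - 1 + 1)))"
      using \<open>0 \<le> c\<close> \<open>0 < \<gamma>\<close> \<open>0 < r\<close>
      by (intro nn_integral_has_integral_lebesgue' has_integral_mult_right has_integral_powr_from_0) auto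
    also have "c * (r powr (\<gamma> - 1 + 1) / (\<gamma> - 1 + 1)) = K / \<gamma> * Wfun w r"
      unfolding c_def using \<open>0 < r\<close> \<open>0 < \<gamma>\<close> by simp
    finally show ?thesis .
  qed
  then show "\<exists>C>0. \<forall>r>0. (\<integral>\<^sup>+ x. ennreal (Wfun w x / x) * indicator {0<..r} x \<partial>lborel) \<le> ennreal (C * Wfun w r)"
    using \<open>0 < K\<close> \<open>0 < \<gamma>\<close> by (intro exI[of _ "K / \<gamma>"]) auto
qed

theorem proposition2p3:
  fixes w :: "real \<Rightarrow> real"
  assumes "weight w"
  defines "W \<equiv> Wfun w"
  shows "(B_star_infty w \<longleftrightarrow> (\<exists>lam\<in>{0<..<1}. Wbar w lam < 1))
       \<and> (B_star_infty w \<longleftrightarrow> (\<exists>C>0. \<forall>t s. 0 < t \<and> t \<le> s \<longrightarrow>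
              W t / W s \<le> C * (1 + ln (s / t)) powr (-1)))
       \<and> (B_star_infty w \<longleftrightarrow> (\<forall>p>0. \<exists>C>0. \<forall>t s. 0 < t \<and> t \<le> s \<longrightarrow>
              W t / W s \<le> C * (1 + ln (s / t)) powr (-p)))
       \<and> (B_star_infty w \<longleftrightarrow> (Wbar w \<longlongrightarrow> 0) (at_right 0))
       \<and> (B_star_infty w \<longleftrightarrow> (\<forall>\<epsilon>>0. \<exists>\<delta>>0. \<forall>t s. 0 < t \<and> 0 < s \<and> t \<le> \<delta> * s \<longrightarrow>
              W t \<le> \<epsilon> * W s))"
  (is "(?B \<longleftrightarrow> ?ii) \<and> (?B \<longleftrightarrow> ?iii) \<and> (?B \<longleftrightarrow> ?iv) \<and> (?B \<longleftrightarrow> ?v) \<and> (?B \<longleftrightarrow> ?vi)")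
proof -
  note w = assms(1)
  note pos = Wfun_pos[OF w] and mono = Wfun_mono_on[OF w]
  let ?power_decay = "\<exists>K>0. \<exists>\<gamma>>0. \<forall>t s. 0 < t \<and> t \<le> s \<longrightarrow> W t \<le> K * (t / s) powr \<gamma> * W s"
  have "?B \<Longrightarrow> ?iii"
    unfolding W_def by (intro log_bound_imp_log_decay[OF pos mono] B_star_infty_imp_log_bound[OF w])
  moreover have "?iii \<Longrightarrow> ?vi"
    unfolding W_def by (rule log_decay_imp_small_ratio[OF pos])
  moreover have "?vi \<Longrightarrow> ?v"
    unfolding W_def by (rule small_ratio_imp_Wbar_tendsto_0[OF w])
  moreover have "?v \<Longrightarrow> ?ii"
    by (rule Wbar_tendsto_0_imp_Wbar_less_1)
  moreover have "?ii \<Longrightarrow> ?power_decay"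
    unfolding W_def by (rule Wbar_less_1_imp_power_decay[OF w])
  moreover have "?power_decay \<Longrightarrow> ?B"
    unfolding W_def by (rule power_decay_imp_B_star_infty[OF w])
  moreover have "?power_decay \<Longrightarrow> ?iv"
    unfolding W_def by (rule power_decay_imp_log_decay[OF pos])
  moreover have "?iv \<Longrightarrow> ?iii"
    by (erule allE[of _ 1]) simp
  ultimately show ?thesis by argo
qed

end
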